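(* Let $\varepsilon\in\mathbb R$ and let $u\in C^4([-1,1])$ be positive. With $H:=\frac12\bigl(\frac{1}{u\sqrt{1+u'^2}}-\frac{u''}{(1+u'^2)^{3/2}}\bigr)$ define $$M[u](x):=\frac{u(x)u'(x)H'(x)}{1+u'(x)^2}+\frac{u(x)H(x)^2}{\sqrt{1+u'(x)^2}}-\frac{H(x)}{1+u'(x)^2}-\varepsilon\frac{u(x)}{\sqrt{1+u'(x)^2}}.$$ Then $$\frac{d}{dx}M[u](x)=u(x)u'(x)\Bigl\{\frac{1}{u\sqrt{1+u'^2}}\frac{d}{dx}\Bigl(\frac{u}{\sqrt{1+u'^2}}H'\Bigr)+\frac12H\Bigl(\frac{u''}{(1+u'^2)^{3/2}}+\frac{1}{u\sqrt{1+u'^2}}\Bigr)^2-2\varepsilon H\Bigr\}(x).$$ *)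

theory Defs
  imports "HOL-Analysis.Analysis"
begin

text \<open>Mean-curvature-type quantity
  H = 1/2 (1/(u sqrt(1+u'^2)) - u''/(1+u'^2)^(3/2)),
  with u1, u2 standing for u', u''.\<close>
definition Hc :: "(real \<Rightarrow> real) \<Rightarrow> (real \<Rightarrow> real) \<Rightarrow> (real \<Rightarrow> real) \<Rightarrow> real \<Rightarrow> real" where
  "Hc u u1 u2 x = (1 / (u x * sqrt (1 + (u1 x)^2)) - u2 x / (1 + (u1 x)^2) powr (3/2)) / 2"

definition Hp :: "(real \<Rightarrow> real) \<Rightarrow> (real \<Rightarrow> real) \<Rightarrow> (real \<Rightarrow> real) \<Rightarrow> real \<Rightarrow> real" where
  "Hp u u1 u2 x = vector_derivative (Hc u u1 u2) (at x within {-1..1})"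

definition Mc :: "real \<Rightarrow> (real \<Rightarrow> real) \<Rightarrow> (real \<Rightarrow> real) \<Rightarrow> (real \<Rightarrow> real) \<Rightarrow> real \<Rightarrow> real" where
  "Mc eps u u1 u2 x =
     u x * u1 x * Hp u u1 u2 x / (1 + (u1 x)^2)
     + u x * (Hc u u1 u2 x)^2 / sqrt (1 + (u1 x)^2)
     - Hc u u1 u2 x / (1 + (u1 x)^2)
     - eps * u x / sqrt (1 + (u1 x)^2)"

end

theory Submission
  imports Defs
begin

text \<open>Write \<open>w = sqrt (1 + u'^2)\<close>. Then \<open>(u/w)' = 2 u u' H\<close> and \<open>(u'/w)' = u''/w^3\<close>, so
  \<open>M = (u'/w) (u H'/w) + (u/w) H^2 - H/w^2 - \<epsilon> u/w\<close> can be differentiated by the product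
  rule alone. The terms containing \<open>H'\<close> cancel because \<open>2H = 1/(u w) - u''/w^3\<close>, and the
  remaining terms give the claimed expression. The second derivative of \<open>H\<close> needed for
  \<open>(u H'/w)'\<close> exists because the derivative \<open>H'\<close> taken within \<open>[-1,1]\<close> agrees with an
  explicit expression in \<open>u\<close> and its first three derivatives.\<close>

definition arc_factor :: "(real \<Rightarrow> real) \<Rightarrow> real \<Rightarrow> real" where
  "arc_factor f x = sqrt (1 + (f x)^2)"

lemma arc_factor_pos: "0 < arc_factor f x"
  by (simp add: arc_factor_def add_pos_nonneg)

lemma arc_factor_square: "(arc_factor f x)^2 = 1 + (f x)^2"
  by (simp add: arc_factor_def)

lemma powr_three_halves: "0 \<le> (t::real) \<Longrightarrow> t powr (3/2) = sqrt t ^ 3"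
proof -
  assume "0 \<le> t"
  then have "t powr (3/2) = t * t powr (1/2)"
    using powr_add [of t 1 "1/2"] by simp
  then show ?thesis
    using \<open>0 \<le> t\<close> by (simp add: powr_half_sqrt power3_eq_cube)
qed

lemma Hc_arc_factor:
  "Hc u u1 u2 x = (1 / (u x * arc_factor u1 x) - u2 x / arc_factor u1 x ^ 3) / 2"
  by (simp add: Hc_def arc_factor_def powr_three_halves add_nonneg_nonneg)

lemma has_real_derivative_arc_factor:
  assumes "(f has_real_derivative f') (at x within S)"
  shows "(arc_factor f has_real_derivative f x * f' / arc_factor f x) (at x within S)"
  unfolding arc_factor_def [abs_def]
  using assms arc_factor_pos [of f x]
  by (auto intro!: derivative_eq_intros simp: arc_factor_def field_simps)

lemma has_real_derivative_div_arc_factor: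
  assumes "(u has_real_derivative u1 x) (at x within S)"
    and "(u1 has_real_derivative u2 x) (at x within S)"
    and "u x \<noteq> 0"
  shows "((\<lambda>y. u y / arc_factor u1 y) has_real_derivative 2 * u x * u1 x * Hc u u1 u2 x)
    (at x within S)"
  using assms arc_factor_pos [of u1 x]
  by (auto intro!: derivative_eq_intros has_real_derivative_arc_factor
      simp: Hc_arc_factor field_simps power2_eq_square power3_eq_cube)

lemma has_real_derivative_slope_div_arc_factor:
  assumes "(u1 has_real_derivative u2 x) (at x within S)"
  shows "((\<lambda>y. u1 y / arc_factor u1 y) has_real_derivative u2 x / arc_factor u1 x ^ 3)
    (at x within S)"
  using assms arc_factor_pos [of u1 x] arc_factor_square [of u1 x]
  by (auto intro!: derivative_eq_intros has_real_derivative_arc_factor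
      simp: field_simps power2_eq_square power3_eq_cube)

definition Hc_deriv ::
    "(real \<Rightarrow> real) \<Rightarrow> (real \<Rightarrow> real) \<Rightarrow> (real \<Rightarrow> real) \<Rightarrow> (real \<Rightarrow> real) \<Rightarrow> real \<Rightarrow> real" where
  "Hc_deriv u u1 u2 u3 x =
     (3 * u1 x * u2 x ^ 2 / arc_factor u1 x ^ 5 - u3 x / arc_factor u1 x ^ 3
      - u1 x * (arc_factor u1 x ^ 2 + u x * u2 x) / (u x ^ 2 * arc_factor u1 x ^ 3)) / 2"

lemma has_real_derivative_Hc:
  assumes "(u has_real_derivative u1 x) (at x within S)"
    and "(u1 has_real_derivative u2 x) (at x within S)"
    and "(u2 has_real_derivative u3 x) (at x within S)"
    and "u x \<noteq> 0"
  shows "(Hc u u1 u2 has_real_derivative Hc_deriv u u1 u2 u3 x) (at x within S)"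
proof -
  have "Hc u u1 u2 = (\<lambda>y. (1 / (u y * arc_factor u1 y) - u2 y / arc_factor u1 y ^ 3) / 2)"
    by (rule ext) (rule Hc_arc_factor)
  show ?thesis
    unfolding \<open>Hc u u1 u2 = _\<close>
    using assms arc_factor_pos [of u1 x]
    by (auto intro!: derivative_eq_intros has_real_derivative_arc_factor
        simp: Hc_deriv_def field_simps) algebra
qed

lemma Hc_deriv_differentiable:
  assumes "(u has_real_derivative u1 x) (at x within S)"
    and "(u1 has_real_derivative u2 x) (at x within S)"
    and "(u2 has_real_derivative u3 x) (at x within S)"
    and "(u3 has_real_derivative u4 x) (at x within S)"
    and "u x \<noteq> 0"
  shows "Hc_deriv u u1 u2 u3 differentiable (at x within S)"
proof -
  have "u differentiable (at x within S)" "u1 differentiable (at x within S)"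
    "u2 differentiable (at x within S)" "u3 differentiable (at x within S)"
    "arc_factor u1 differentiable (at x within S)"
    using assms has_real_derivative_arc_factor [OF assms(2)]
    by (auto simp: real_differentiable_def)
  then show ?thesis
    using assms(5) arc_factor_pos [of u1 x] unfolding Hc_deriv_def [abs_def]
    by (auto intro!: derivative_intros)
qed

text \<open>With \<open>g = 1/(u w)\<close> and \<open>k = b/w^3\<close>: the \<open>H'\<close>-terms vanish since \<open>u g = 1/w\<close>, and the
  rest is \<open>(k + g)^2 = (g - k)^2 + 4 g k\<close>.\<close>
lemma Mc_derivative_identity:
  fixes u a b w H H' P' eps :: real
  assumes "u \<noteq> 0" "w \<noteq> 0" and H: "H = (1 / (u * w) - b / w^3) / 2"
  shows "b / w^3 * (u / w * H') + a / w * P' + (2 * u * a * H * H^2 + u / w * (2 * H * H'))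
      - (H' / w^2 - 2 * a * b * H / w^4) - eps * (2 * u * a * H)
    = u * a * (1 / (u * w) * P' + 1/2 * H * (b / w^3 + 1 / (u * w))^2 - 2 * eps * H)"
  unfolding H using assms(1,2) by (simp add: field_simps) algebra

lemma has_real_derivative_Mc:
  assumes d1: "(u has_real_derivative u1 x) (at x within S)"
    and d2: "(u1 has_real_derivative u2 x) (at x within S)"
    and dHc: "(Hc u u1 u2 has_real_derivative Hp u u1 u2 x) (at x within S)"
    and dP: "((\<lambda>y. u y / arc_factor u1 y * Hp u u1 u2 y) has_real_derivative P') (at x within S)"
    and "u x \<noteq> 0"
  shows "(Mc eps u u1 u2 has_real_derivative
      u x * u1 x * (1 / (u x * arc_factor u1 x) * P'
        + 1/2 * Hc u u1 u2 x * (u2 x / arc_factor u1 x ^ 3 + 1 / (u x * arc_factor u1 x))^2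
        - 2 * eps * Hc u u1 u2 x)) (at x within S)"
proof -
  define q where "q y = u y / arc_factor u1 y" for y
  define s where "s y = u1 y / arc_factor u1 y" for y
  define P where "P y = q y * Hp u u1 u2 y" for y
  have dq: "(q has_real_derivative 2 * u x * u1 x * Hc u u1 u2 x) (at x within S)"
    unfolding q_def [abs_def] using d1 d2 \<open>u x \<noteq> 0\<close> by (rule has_real_derivative_div_arc_factor)
  have ds: "(s has_real_derivative u2 x / arc_factor u1 x ^ 3) (at x within S)"
    unfolding s_def [abs_def] using d2 by (rule has_real_derivative_slope_div_arc_factor)
  have dw: "(arc_factor u1 has_real_derivative u1 x * u2 x / arc_factor u1 x) (at x within S)"
    using d2 by (rule has_real_derivative_arc_factor)
  have "Mc eps u u1 u2 = (\<lambda>y. s y * P y + q y * Hc u u1 u2 y ^ 2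
      - Hc u u1 u2 y / arc_factor u1 y ^ 2 - eps * q y)"
    by (simp add: fun_eq_iff Mc_def P_def q_def s_def arc_factor_def field_simps add_nonneg_nonneg)
  then have "(Mc eps u u1 u2 has_real_derivative
      u2 x / arc_factor u1 x ^ 3 * (u x / arc_factor u1 x * Hp u u1 u2 x)
      + u1 x / arc_factor u1 x * P'
      + (2 * u x * u1 x * Hc u u1 u2 x * Hc u u1 u2 x ^ 2
         + u x / arc_factor u1 x * (2 * Hc u u1 u2 x * Hp u u1 u2 x))
      - (Hp u u1 u2 x / arc_factor u1 x ^ 2
         - 2 * u1 x * u2 x * Hc u u1 u2 x / arc_factor u1 x ^ 4)
      - eps * (2 * u x * u1 x * Hc u u1 u2 x)) (at x within S)"
    using dP [folded q_def, folded P_def] arc_factor_pos [of u1 x]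
    by (auto intro!: derivative_eq_intros dq ds dHc dw
        simp: P_def [of x] q_def [of x] s_def [of x]) (simp add: field_simps)
  moreover have "arc_factor u1 x \<noteq> 0"
    using arc_factor_pos [of u1 x] by simp
  ultimately show ?thesis
    using Mc_derivative_identity [OF \<open>u x \<noteq> 0\<close> _ Hc_arc_factor [of u u1 u2 x]] by simp
qed

lemma Hp_eq_Hc_deriv:
  assumes "x \<in> {-1..1}"
    and "(u has_real_derivative u1 x) (at x within {-1..1})"
    and "(u1 has_real_derivative u2 x) (at x within {-1..1})"
    and "(u2 has_real_derivative u3 x) (at x within {-1..1})"
    and "u x \<noteq> 0"
  shows "Hp u u1 u2 x = Hc_deriv u u1 u2 u3 x"
proof -
  have "(Hc u u1 u2 has_real_derivative Hc_deriv u u1 u2 u3 x) (at x within {-1..1})"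
    using assms(2-5) by (rule has_real_derivative_Hc)
  then show ?thesis
    unfolding Hp_def using assms(1)
    by (intro vector_derivative_within_closed_interval)
      (auto simp: has_real_derivative_iff_has_vector_derivative)
qed

lemma Hp_differentiable:
  assumes "x \<in> {-1..1}" and "\<forall>y\<in>{-1..1}. u y \<noteq> 0"
    and "\<forall>y\<in>{-1..1}. (u has_real_derivative u1 y) (at y within {-1..1})"
    and "\<forall>y\<in>{-1..1}. (u1 has_real_derivative u2 y) (at y within {-1..1})"
    and "\<forall>y\<in>{-1..1}. (u2 has_real_derivative u3 y) (at y within {-1..1})"
    and "\<forall>y\<in>{-1..1}. (u3 has_real_derivative u4 y) (at y within {-1..1})"
  shows "Hp u u1 u2 differentiable (at x within {-1..1})"
proof (rule differentiable_transform_within [OF _ zero_less_one \<open>x \<in> {-1..1}\<close>])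
  show "Hc_deriv u u1 u2 u3 differentiable (at x within {-1..1})"
    using assms by (intro Hc_deriv_differentiable) auto
  show "Hc_deriv u u1 u2 u3 y = Hp u u1 u2 y" if "y \<in> {-1..1}" for y
    using that assms by (intro Hp_eq_Hc_deriv [symmetric]) auto
qed

theorem lemmaB1:
  fixes eps :: real and u u1 u2 u3 u4 :: "real \<Rightarrow> real"
  assumes pos: "\<forall>x\<in>{-1..1}. u x > 0"
    and d1: "\<forall>x\<in>{-1..1}. (u has_real_derivative u1 x) (at x within {-1..1})"
    and d2: "\<forall>x\<in>{-1..1}. (u1 has_real_derivative u2 x) (at x within {-1..1})"
    and d3: "\<forall>x\<in>{-1..1}. (u2 has_real_derivative u3 x) (at x within {-1..1})"
    and d4: "\<forall>x\<in>{-1..1}. (u3 has_real_derivative u4 x) (at x within {-1..1})"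
    and c4: "continuous_on {-1..1} u4"
  shows "\<forall>x\<in>{-1..1}. (Mc eps u u1 u2 has_real_derivative
      u x * u1 x *
        (1 / (u x * sqrt (1 + (u1 x)^2)) *
           vector_derivative (\<lambda>y. u y / sqrt (1 + (u1 y)^2) * Hp u u1 u2 y) (at x within {-1..1})
         + 1/2 * Hc u u1 u2 x *
             (u2 x / (1 + (u1 x)^2) powr (3/2) + 1 / (u x * sqrt (1 + (u1 x)^2)))^2
         - 2 * eps * Hc u u1 u2 x))
      (at x within {-1..1})"
proof
  fix x :: real
  assume x: "x \<in> {-1..1}"
  have u_ne: "\<forall>y\<in>{-1..1}. u y \<noteq> 0"
    using pos by force
  have "Hc u u1 u2 differentiable (at x within {-1..1})"
    using has_real_derivative_Hc x d1 d2 d3 u_ne real_differentiable_def by blast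
  then have dHc: "(Hc u u1 u2 has_real_derivative Hp u u1 u2 x) (at x within {-1..1})"
    by (simp add: Hp_def vector_derivative_works has_real_derivative_iff_has_vector_derivative)
  have "(\<lambda>y. u y / arc_factor u1 y) differentiable (at x within {-1..1})"
    using has_real_derivative_div_arc_factor x d1 d2 u_ne real_differentiable_def by blast
  moreover have "Hp u u1 u2 differentiable (at x within {-1..1})"
    using x u_ne d1 d2 d3 d4 by (rule Hp_differentiable)
  ultimately have "(\<lambda>y. u y / arc_factor u1 y * Hp u u1 u2 y) differentiable (at x within {-1..1})"
    by (rule differentiable_mult)
  then have dP: "((\<lambda>y. u y / arc_factor u1 y * Hp u u1 u2 y) has_real_derivative
      vector_derivative (\<lambda>y. u y / arc_factor u1 y * Hp u u1 u2 y) (at x within {-1..1}))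
      (at x within {-1..1})"
    by (simp add: vector_derivative_works has_real_derivative_iff_has_vector_derivative)
  from has_real_derivative_Mc [OF _ _ dHc dP] x d1 d2 u_ne
  show "(Mc eps u u1 u2 has_real_derivative
      u x * u1 x *
        (1 / (u x * sqrt (1 + (u1 x)^2)) *
           vector_derivative (\<lambda>y. u y / sqrt (1 + (u1 y)^2) * Hp u u1 u2 y) (at x within {-1..1})
         + 1/2 * Hc u u1 u2 x *
             (u2 x / (1 + (u1 x)^2) powr (3/2) + 1 / (u x * sqrt (1 + (u1 x)^2)))^2
         - 2 * eps * Hc u u1 u2 x))
      (at x within {-1..1})"
    by (simp add: arc_factor_def powr_three_halves add_nonneg_nonneg)
qed

end
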